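(* Let $n\ge0$ and run the Tiden–Arnborg algorithm on $\sigma(n)$, performing sum transformations level by level. The sum transformations at level $k$ create a peak at $x_{1^k}$ (a node of level $k+1$), provided level $k+1$ is not the lowest level $n+3$.
   Context: Variables are $T$, $x_s$, $y_s$ with $s$ a string over $\{1,2\}$ ($x=x_\varepsilon$, $y=y_\varepsilon$); the level of $x_s$ or $y_s$ is $|s|+1$. For $n\ge0$, $\sigma(n)$ consists of, for all $0\le i\le n$: $x_{1^i}=^?x_{1^{i+1}}+x_{1^i2}$, $y_{2^i}=^?y_{2^i1}+y_{2^{i+1}}$, $y_{2^i1}=^?T\times x_{1^i2}$, $x=^?T\times y$, $x_{1^{i+1}}=^?x_{1^{i+2}}+x_{1^{i+1}2}$; its variables occupy levels $1,\dots,n+3$. A variable $U_i$ ($U\in\{x,y\}$) is a peak if the current system contains both $U_i=^?U_{i1}+U_{i2}$ and $U_i=^?T\times W_j$ for some $W_j$. A sum transformation at a peak $U_i$ replaces $U_i=^?U_{i1}+U_{i2}$ by $W_j=^?W_{j1}+W_{j2}$, $U_{i1}=^?T\times W_{j1}$, $U_{i2}=^?T\times W_{j2}$ (keeping $U_i=^?T\times W_j$), with $W_{j1},W_{j2}$ identified with the existing children of $W_j$ if $W_j$ already has a sum equation. The Tiden–Arnborg algorithm (for $x\times(y+z)=x\times y+x\times z$) applies sum transformations as long as possible; here all sum transformations at one level are completed before those at the next level. *)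

theory Defs
  imports Main
begin

datatype letter = L1 | L2

datatype var = T | X "letter list" | Y "letter list"

text \<open>Children: U_s |-> U_{s a}.  (Value on T is irrelevant.)\<close>
fun ch :: "var \<Rightarrow> letter \<Rightarrow> var" where
  "ch (X s) a = X (s @ [a])"
| "ch (Y s) a = Y (s @ [a])"
| "ch T a = T"

text \<open>Level of x_s or y_s is |s|+1 (T gets level 0, it has no level).\<close>
fun level :: "var \<Rightarrow> nat" where
  "level (X s) = length s + 1"
| "level (Y s) = length s + 1"
| "level T = 0"

text \<open>Equations: SumEq U V W means U =? V + W; ProdEq U W means U =? T \<times> W.\<close>
datatype eqn = SumEq var var var | ProdEq var var

definition sigma :: "nat \<Rightarrow> eqn set" where
  "sigma n = (\<Union>i\<in>{0..n}.
     { SumEq (X (replicate i L1)) (X (replicate (Suc i) L1)) (X (replicate i L1 @ [L2])),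
       SumEq (Y (replicate i L2)) (Y (replicate i L2 @ [L1])) (Y (replicate (Suc i) L2)),
       ProdEq (Y (replicate i L2 @ [L1])) (X (replicate i L1 @ [L2])),
       ProdEq (X []) (Y []),
       SumEq (X (replicate (Suc i) L1)) (X (replicate (Suc (Suc i)) L1))
             (X (replicate (Suc i) L1 @ [L2])) })"

definition peak :: "eqn set \<Rightarrow> var \<Rightarrow> bool" where
  "peak S U \<longleftrightarrow> SumEq U (ch U L1) (ch U L2) \<in> S \<and> (\<exists>W. ProdEq U W \<in> S)"

definition children :: "eqn set \<Rightarrow> var \<Rightarrow> var \<times> var" where
  "children S W = (if \<exists>A B. SumEq W A B \<in> S
                   then (SOME p. SumEq W (fst p) (snd p) \<in> S)
                   else (ch W L1, ch W L2))"

definition sum_trans :: "eqn set \<Rightarrow> var \<Rightarrow> var \<Rightarrow> eqn set" where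
  "sum_trans S U W = (case children S W of (A, B) \<Rightarrow>
      (S - {SumEq U (ch U L1) (ch U L2)})
      \<union> {SumEq W A B, ProdEq (ch U L1) A, ProdEq (ch U L2) B})"

definition step :: "nat \<Rightarrow> eqn set \<Rightarrow> eqn set \<Rightarrow> bool" where
  "step j S S' \<longleftrightarrow> (\<exists>U W. level U = j \<and> peak S U \<and> ProdEq U W \<in> S \<and> S' = sum_trans S U W)"

end

theory Submission
  imports Defs
begin

(* A sum transformation at level j deletes only the sum equation of a variable of level j,
  and the only product equations it adds are for children of that variable, which have level
  j + 1; at a peak U it either keeps the peak or gives the left child U1 a product equation.
  On the spine x, x1, x11, ... of sigma(n) only x has a product equation. So, by induction on
  the rounds, eliminating the peak at x_{1^(k-1)} in round k can only happen by giving x_{1^k}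
  a product equation, while the sum equation of x_{1^k} (present in sigma(n) unless x_{1^k}
  is at the lowest level) survives all earlier rounds, which act on higher levels. *)

abbreviation sum_eq :: "var \<Rightarrow> eqn" where
  "sum_eq V \<equiv> SumEq V (ch V L1) (ch V L2)"

abbreviation x_spine :: "nat \<Rightarrow> var" where
  "x_spine m \<equiv> X (replicate m L1)"

lemma stepE:
  assumes "step j S S'"
  obtains U W A B where "level U = j" "peak S U" "ProdEq U W \<in> S"
    "S' = (S - {sum_eq U}) \<union> {SumEq W A B, ProdEq (ch U L1) A, ProdEq (ch U L2) B}"
proof -
  from assms obtain U W where "level U = j" "peak S U" "ProdEq U W \<in> S" "S' = sum_trans S U W"
    unfolding step_def by blast
  then show ?thesis
    using that by (cases "children S W") (simp add: sum_trans_def)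
qed

lemma level_ch: "1 \<le> level U \<Longrightarrow> level (ch U a) = Suc (level U)"
  by (cases U) auto

lemma step_keeps_sum_eq: "step j S S' \<Longrightarrow> sum_eq V \<in> S \<Longrightarrow> level V \<noteq> j \<Longrightarrow> sum_eq V \<in> S'"
  by (erule stepE) auto

lemma step_keeps_prod_eq: "step j S S' \<Longrightarrow> ProdEq A B \<in> S \<Longrightarrow> ProdEq A B \<in> S'"
  by (erule stepE) auto

lemma step_new_prod_eq_level:
  "step j S S' \<Longrightarrow> ProdEq A W \<in> S' \<Longrightarrow> ProdEq A W \<notin> S \<Longrightarrow> 1 \<le> j \<Longrightarrow> level A = Suc j"
  by (erule stepE) (auto simp: level_ch)

lemma steps_keep_sum_eq:
  "(step j)\<^sup>*\<^sup>* S S' \<Longrightarrow> sum_eq V \<in> S \<Longrightarrow> level V \<noteq> j \<Longrightarrow> sum_eq V \<in> S'"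
  by (induction rule: rtranclp_induct) (auto intro: step_keeps_sum_eq)

lemma steps_no_new_prod_eq:
  "(step j)\<^sup>*\<^sup>* S S' \<Longrightarrow> ProdEq A W \<in> S' \<Longrightarrow> level A \<noteq> Suc j \<Longrightarrow> 1 \<le> j \<Longrightarrow> ProdEq A W \<in> S"
  by (induction rule: rtranclp_induct) (auto dest: step_new_prod_eq_level)

lemma steps_peak_or_prod_eq_left_child:
  assumes "(step j)\<^sup>*\<^sup>* S0 S" "peak S0 V"
  shows "peak S V \<or> (\<exists>W. ProdEq (ch V L1) W \<in> S)"
  using assms(1)
proof (induction rule: rtranclp_induct)
  case base
  then show ?case using assms(2) by simp
next
  case (step S S')
  from step.IH show ?case
  proof
    assume "peak S V"
    from step.hyps(2) show ?thesis
    proof (rule stepE)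
      fix U W A B
      assume "S' = (S - {sum_eq U}) \<union> {SumEq W A B, ProdEq (ch U L1) A, ProdEq (ch U L2) B}"
      with \<open>peak S V\<close> show ?thesis
        unfolding peak_def by (cases "U = V") auto
    qed
  qed (use step_keeps_prod_eq[OF step.hyps(2)] in blast)
qed

lemma ch_x_spine: "ch (x_spine m) L1 = x_spine (Suc m)"
  by (simp add: replicate_append_same)

lemma sigma_sum_eq_x_spine: "m \<le> Suc n \<Longrightarrow> sum_eq (x_spine m) \<in> sigma n"
proof (cases m)
  case 0
  then show ?thesis unfolding sigma_def by force
next
  case (Suc i)
  moreover assume "m \<le> Suc n"
  ultimately show ?thesis
    unfolding sigma_def by (intro UN_I[of i]) (simp_all add: replicate_append_same)
qed

lemma sigma_prod_eq_x: "ProdEq (x_spine 0) (Y []) \<in> sigma n"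
  unfolding sigma_def by force

lemma sigma_no_prod_eq_x_spine: "1 \<le> m \<Longrightarrow> ProdEq (x_spine m) W \<notin> sigma n"
  unfolding sigma_def by (cases m) auto

lemma rounds_no_prod_eq_x_spine:
  assumes "Ss 0 = sigma n" and "\<And>i. i < j \<Longrightarrow> (step (Suc i))\<^sup>*\<^sup>* (Ss i) (Ss (Suc i))"
    and "j < m"
  shows "ProdEq (x_spine m) W \<notin> Ss j"
  using assms(2,3)
proof (induction j)
  case 0
  then show ?case using assms(1) sigma_no_prod_eq_x_spine by simp
next
  case (Suc j)
  then show ?case using steps_no_new_prod_eq[of "Suc j" "Ss j" "Ss (Suc j)"] by auto
qed

lemma rounds_sum_eq_x_spine:
  assumes "Ss 0 = sigma n" and "\<And>i. i < j \<Longrightarrow> (step (Suc i))\<^sup>*\<^sup>* (Ss i) (Ss (Suc i))"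
    and "j \<le> m" "m \<le> Suc n"
  shows "sum_eq (x_spine m) \<in> Ss j"
  using assms(2,3)
proof (induction j)
  case 0
  then show ?case using assms(1,4) sigma_sum_eq_x_spine by simp
next
  case (Suc j)
  then show ?case using steps_keep_sum_eq[of "Suc j" "Ss j" "Ss (Suc j)" "x_spine m"] by auto
qed

lemma rounds_peak_x_spine:
  assumes "Ss 0 = sigma n" and "\<And>i. i < j \<Longrightarrow> (step (Suc i))\<^sup>*\<^sup>* (Ss i) (Ss (Suc i))"
    and "\<And>i. i < j \<Longrightarrow> \<not> peak (Ss (Suc i)) (x_spine i)"
    and "j \<le> Suc n"
  shows "peak (Ss j) (x_spine j)"
  using assms(2-4)
proof (induction j)
  case 0
  then show ?case
    using assms(1) sigma_sum_eq_x_spine[of 0 n] sigma_prod_eq_x[of n] by (auto simp: peak_def)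
next
  case (Suc j)
  then have "peak (Ss j) (x_spine j)" by simp
  with Suc.prems(1)[of j] have "peak (Ss (Suc j)) (x_spine j)
      \<or> (\<exists>W. ProdEq (x_spine (Suc j)) W \<in> Ss (Suc j))"
    using steps_peak_or_prod_eq_left_child[where V = "x_spine j"] unfolding ch_x_spine by simp
  moreover have "sum_eq (x_spine (Suc j)) \<in> Ss (Suc j)"
    by (rule rounds_sum_eq_x_spine[where Ss = Ss, OF assms(1) Suc.prems(1)]) (use Suc.prems in auto)
  ultimately show ?case
    using Suc.prems(2)[of j] by (auto simp: peak_def)
qed

theorem lemma1:
  fixes n k :: nat and Ss :: "nat \<Rightarrow> eqn set"
  assumes "Ss 0 = sigma n"
    and "\<forall>j. 1 \<le> j \<and> j \<le> k \<longrightarrow>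
           (step j)\<^sup>*\<^sup>* (Ss (j - 1)) (Ss j) \<and> (\<forall>U. level U = j \<longrightarrow> \<not> peak (Ss j) U)"
    and "1 \<le> k" and "k + 1 < n + 3"
  shows "\<not> peak (Ss (k - 1)) (X (replicate k L1)) \<and> peak (Ss k) (X (replicate k L1))"
proof
  have rounds: "(step (Suc i))\<^sup>*\<^sup>* (Ss i) (Ss (Suc i))" if "i < k" for i
    using assms(2) that by (metis Suc_leI diff_Suc_1 le_add1 plus_1_eq_Suc)
  have "ProdEq (x_spine k) W \<notin> Ss (k - 1)" for W
    using rounds_no_prod_eq_x_spine[where Ss = Ss, OF assms(1)] rounds assms(3) by simp
  then show "\<not> peak (Ss (k - 1)) (x_spine k)"
    unfolding peak_def by blast
  have "\<not> peak (Ss (Suc i)) (x_spine i)" if "i < k" for i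
    using assms(2) that by auto
  then show "peak (Ss k) (x_spine k)"
    using rounds_peak_x_spine[where Ss = Ss, OF assms(1)] rounds assms(4) by simp
qed

end
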